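(* Let $(v_\alpha(x))_{\alpha\in A}$ be a collection of real-analytic $\mathbb C^K$-valued functions on a neighborhood of $0$ in $\mathbb R^m$. If the dimension of $\operatorname{span}_\mathbb C\{v_\alpha(x):\alpha\in A\}$ is not constant for $x$ in any neighborhood of $0$, then there exists an integer $\kappa>1$ such that, for any other collection $(v'_\alpha(x))_{\alpha\in A}$ of real-analytic $\mathbb C^K$-valued functions on some neighborhood of $0$ with $v'_\alpha(x)=v_\alpha(x)+O(|x|^\kappa)$ for every $\alpha\in A$, the dimension of $\operatorname{span}_\mathbb C\{v'_\alpha(x):\alpha\in A\}$ is also not constant in any neighborhood of $0$. *)

theory Defs
  imports "HOL-Analysis.Analysis"
begin

text \<open>Real-analyticity of a map from R^m (= real^'m) to C^K (= complex^'k):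
  near every point it is the sum of an (unconditionally, i.e. absolutely) convergent
  power series in the m real coordinates, indexed by multi-indices 'm \<Rightarrow> nat.\<close>

definition real_analytic_at :: "(real^'m \<Rightarrow> complex^'k) \<Rightarrow> real^'m \<Rightarrow> bool" where
  "real_analytic_at f x0 \<longleftrightarrow>
     (\<exists>r>0. \<exists>c :: ('m \<Rightarrow> nat) \<Rightarrow> complex^'k.
        \<forall>x\<in>ball x0 r.
          ((\<lambda>\<alpha>. (\<Prod>i\<in>UNIV. (x$i - x0$i) ^ (\<alpha> i)) *\<^sub>R c \<alpha>) has_sum f x) UNIV)"

definition real_analytic_on :: "(real^'m \<Rightarrow> complex^'k) \<Rightarrow> (real^'m) set \<Rightarrow> bool" where
  "real_analytic_on f U \<longleftrightarrow> (\<forall>x\<in>U. real_analytic_at f x)"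

definition span_dim :: "('a \<Rightarrow> real^'m \<Rightarrow> complex^'k) \<Rightarrow> 'a set \<Rightarrow> real^'m \<Rightarrow> nat" where
  "span_dim v A x = vec.dim (vec.span ((\<lambda>\<alpha>. v \<alpha> x) ` A))"

definition dim_nonconstant_near_0 :: "('a \<Rightarrow> real^'m \<Rightarrow> complex^'k) \<Rightarrow> 'a set \<Rightarrow> (real^'m) set \<Rightarrow> bool" where
  "dim_nonconstant_near_0 v A D \<longleftrightarrow>
     (\<forall>U. open U \<longrightarrow> 0 \<in> U \<longrightarrow> U \<subseteq> D \<longrightarrow> (\<exists>x\<in>U. \<exists>y\<in>U. span_dim v A x \<noteq> span_dim v A y))"

end

theory Submission
  imports Defs "HOL-Complex_Analysis.Complex_Analysis"
begin

text \<open>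
  Let \<open>r\<close> be the dimension of the span at \<open>0\<close>. A Gram determinant shows that the dimension
  is lower semicontinuous, so non-constancy produces points \<open>x1\<close> arbitrarily close to \<open>0\<close>
  at which \<open>r + 1\<close> of the vectors \<open>v\<^sub>\<alpha>(x1)\<close> are independent. Let \<open>g(t)\<close> be the
  determinant of their pairings at \<open>t x1\<close> against their values at \<open>x1\<close>. It is
  real-analytic on \<open>[0, 1]\<close> and \<open>g(1) \<noteq> 0\<close>, so by the identity theorem it does not vanish
  identically near \<open>0\<^sup>+\<close>, whence \<open>\<bar>g(t)\<bar> \<ge> c t^d\<close> for small \<open>t > 0\<close>. Put \<open>\<kappa> = d + 2\<close>:
  a perturbation of order \<open>\<kappa>\<close> changes the determinant at \<open>t x1\<close> only by \<open>O(t^(d+2))\<close>, so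
  the perturbed span still has dimension \<open>> r\<close> at \<open>t x1\<close> for all small \<open>t > 0\<close>, while at
  \<open>0\<close>, where the perturbation vanishes, its dimension is still \<open>r\<close>.
\<close>

section \<open>Gram determinants\<close>

definition herm_inner :: "complex^'k \<Rightarrow> complex^'k \<Rightarrow> complex" where
  "herm_inner w u = (\<Sum>j\<in>UNIV. cnj (w $ j) * u $ j)"

lemma herm_inner_sum_right:
  "herm_inner w (\<Sum>l\<in>I. c l *s U l) = (\<Sum>l\<in>I. c l * herm_inner w (U l))"
  by (simp add: herm_inner_def sum_component sum_distrib_left sum_distrib_right
      sum.swap[of _ I] mult_ac)

lemma herm_inner_sum_left:
  "herm_inner (\<Sum>l\<in>I. c l *s U l) u = (\<Sum>l\<in>I. cnj (c l) * herm_inner (U l) u)"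
  by (simp add: herm_inner_def sum_component cnj_sum sum_distrib_left sum_distrib_right
      sum.swap[of _ I] mult_ac)

lemma herm_inner_diff_right: "herm_inner w (u - u') = herm_inner w u - herm_inner w u'"
  by (simp add: herm_inner_def right_diff_distrib sum_subtractf)

lemma herm_inner_self: "herm_inner u u = of_real ((norm u)\<^sup>2)"
proof -
  have "cnj z * z = of_real ((cmod z)\<^sup>2)" for z
    by (metis complex_norm_square mult.commute of_real_power)
  then have "herm_inner u u = (\<Sum>j\<in>UNIV. of_real ((cmod (u $ j))\<^sup>2))"
    unfolding herm_inner_def by (simp only:)
  also have "\<dots> = of_real ((norm u)\<^sup>2)"
    by (simp add: norm_vec_def L2_set_def sum_nonneg)
  finally show ?thesis .
qed

lemma norm_herm_inner_le: "cmod (herm_inner w u) \<le> (\<Sum>j\<in>UNIV. cmod (w $ j)) * norm u"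
proof -
  have "cmod (herm_inner w u) \<le> (\<Sum>j\<in>UNIV. cmod (w $ j) * cmod (u $ j))"
    unfolding herm_inner_def by (rule order_trans[OF norm_sum]) (simp add: norm_mult)
  also have "\<dots> \<le> (\<Sum>j\<in>UNIV. cmod (w $ j) * norm u)"
    by (intro sum_mono mult_left_mono Finite_Cartesian_Product.norm_nth_le) auto
  finally show ?thesis by (simp add: sum_distrib_right)
qed

text \<open>Padding with the identity outside \<open>I \<times> I\<close> makes the determinant the Gram
  determinant of the pairings \<open>\<langle>W k, U l\<rangle>\<close>, \<open>k, l \<in> I\<close>.\<close>

definition gram_matrix :: "'k set \<Rightarrow> ('k \<Rightarrow> complex^'k) \<Rightarrow> ('k \<Rightarrow> complex^'k) \<Rightarrow> complex^'k^'k" where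
  "gram_matrix I W U =
     (\<chi> k l. if k \<in> I \<and> l \<in> I then herm_inner (W k) (U l) else if k = l then 1 else 0)"

lemma gram_matrix_mult_vector:
  fixes x :: "complex^'k::finite"
  shows "(gram_matrix I W U *v x) $ k =
           (if k \<in> I then herm_inner (W k) (\<Sum>l\<in>I. x $ l *s U l) else x $ k)"
proof (cases "k \<in> I")
  case True
  have "(gram_matrix I W U *v x) $ k = (\<Sum>l\<in>UNIV. if l \<in> I then herm_inner (W k) (U l) * x $ l else 0)"
    unfolding matrix_vector_mult_def gram_matrix_def using True by (auto intro!: sum.cong)
  also have "\<dots> = herm_inner (W k) (\<Sum>l\<in>I. x $ l *s U l)"
    by (simp add: sum.If_cases herm_inner_sum_right mult.commute)
  finally show ?thesis using True by simp
next
  case False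
  then show ?thesis
    by (simp add: matrix_vector_mult_def gram_matrix_def if_distrib[of "\<lambda>a. a * _"] cong: if_cong)
qed

lemma det_nonzero_iff_kernel_trivial:
  fixes M :: "'a::field^'n^'n"
  shows "det M \<noteq> 0 \<longleftrightarrow> (\<forall>x. M *v x = 0 \<longrightarrow> x = 0)"
proof -
  have lin: "Vector_Spaces.linear (*s) (*s) ((*v) M)" by simp
  have "det M \<noteq> 0 \<longleftrightarrow> inj ((*v) M)"
    using det_nz_iff_inj_gen[OF lin] by simp
  also have "\<dots> \<longleftrightarrow> (\<forall>x. M *v x = 0 \<longrightarrow> x = 0)"
    using vec.linear_inj_iff_eq_0[OF lin] by auto
  finally show ?thesis .
qed

lemma independent_family_if_det_gram_nonzero:
  fixes U :: "'k::finite \<Rightarrow> complex^'k"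
  assumes "det (gram_matrix I W U) \<noteq> 0" "(\<Sum>l\<in>I. c l *s U l) = 0" "l \<in> I"
  shows "c l = 0"
proof -
  define x where "x = (\<chi> l. if l \<in> I then c l else 0)"
  have "(\<Sum>l\<in>I. x $ l *s U l) = 0"
    using assms(2) by (simp add: x_def)
  then have "gram_matrix I W U *v x = 0"
    by (simp add: vec_eq_iff gram_matrix_mult_vector herm_inner_def) (simp add: x_def)
  then have "x = 0" using assms(1) det_nonzero_iff_kernel_trivial by blast
  then show ?thesis using assms(3) by (simp add: x_def vec_eq_iff) (metis (mono_tags))
qed

lemma det_gram_self_nonzero:
  fixes W :: "'k::finite \<Rightarrow> complex^'k"
  assumes indep: "\<And>c l. (\<Sum>l\<in>I. c l *s W l) = 0 \<Longrightarrow> l \<in> I \<Longrightarrow> c l = 0"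
  shows "det (gram_matrix I W W) \<noteq> 0"
unfolding det_nonzero_iff_kernel_trivial
proof (intro allI impI)
  fix x assume x: "gram_matrix I W W *v x = 0"
  define u where "u = (\<Sum>l\<in>I. x $ l *s W l)"
  have outside: "x $ k = 0" if "k \<notin> I" for k
    using arg_cong[OF x, of "\<lambda>y. y $ k"] that by (simp add: gram_matrix_mult_vector)
  have inside: "herm_inner (W k) u = 0" if "k \<in> I" for k
    using arg_cong[OF x, of "\<lambda>y. y $ k"] that by (simp add: gram_matrix_mult_vector u_def)
  have "herm_inner u u = (\<Sum>l\<in>I. cnj (x $ l) * herm_inner (W l) u)"
    unfolding u_def by (rule herm_inner_sum_left)
  also have "\<dots> = 0" by (simp add: inside)
  finally have "u = 0" by (simp add: herm_inner_self)
  then have "x $ l = 0" if "l \<in> I" for l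
    using indep[of "\<lambda>l. x $ l"] that by (simp add: u_def)
  with outside show "x = 0" by (auto simp: vec_eq_iff)
qed

lemma isCont_det:
  fixes M :: "'x::t2_space \<Rightarrow> 'a::real_normed_field^'n::finite^'n"
  assumes "\<And>i j. isCont (\<lambda>x. M x $ i $ j) x0"
  shows "isCont (\<lambda>x. det (M x)) x0"
  unfolding det_def by (intro continuous_intros assms)

lemma isCont_det_gram_matrix:
  fixes U :: "'k::finite \<Rightarrow> 'x::t2_space \<Rightarrow> complex^'k"
  assumes "\<And>l. l \<in> I \<Longrightarrow> isCont (U l) x0"
  shows "isCont (\<lambda>x. det (gram_matrix I W (\<lambda>l. U l x))) x0"
proof (rule isCont_det)
  fix k l
  show "isCont (\<lambda>x. gram_matrix I W (\<lambda>l. U l x) $ k $ l) x0"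
    using assms by (cases "k \<in> I \<and> l \<in> I") (auto simp: gram_matrix_def herm_inner_def intro!: continuous_intros)
qed

lemma norm_prod_diff_le:
  fixes a b :: "'i \<Rightarrow> 'a::real_normed_field" and M e :: real
  assumes "finite S" "1 \<le> M"
    and "\<And>i. i \<in> S \<Longrightarrow> norm (a i) \<le> M" "\<And>i. i \<in> S \<Longrightarrow> norm (b i) \<le> M"
    and "\<And>i. i \<in> S \<Longrightarrow> norm (a i - b i) \<le> e"
  shows "norm (prod a S - prod b S) \<le> card S * M ^ card S * e"
  using assms(1,3-5)
proof (induction S rule: finite_induct)
  case empty
  then show ?case by simp
next
  case (insert x S)
  have e: "0 \<le> e" using norm_ge_zero order_trans insert.prems(3) by blast
  have IH: "norm (prod a S - prod b S) \<le> card S * M ^ card S * e"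
    using insert by auto
  have "norm (prod b S) = (\<Prod>i\<in>S. norm (b i))" by (simp add: prod_norm)
  also have "\<dots> \<le> M ^ card S"
    using insert.prems(2) prod_mono[of S "\<lambda>i. norm (b i)" "\<lambda>_. M"] by simp
  finally have b: "norm (prod b S) \<le> M ^ card S" .
  have "prod a (insert x S) - prod b (insert x S) = a x * (prod a S - prod b S) + (a x - b x) * prod b S"
    using insert by (simp add: algebra_simps)
  then have "norm (prod a (insert x S) - prod b (insert x S))
      \<le> norm (a x) * norm (prod a S - prod b S) + norm (a x - b x) * norm (prod b S)"
    by (metis norm_mult norm_triangle_ineq)
  also have "\<dots> \<le> M * (card S * M ^ card S * e) + e * M ^ card S"
    using insert.prems IH b e assms(2) by (intro add_mono mult_mono) auto
  also have "\<dots> \<le> M * (card S * M ^ card S * e) + e * (M * M ^ card S)"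
    using e assms(2) by (intro add_left_mono mult_left_mono) auto
  also have "\<dots> = card (insert x S) * M ^ card (insert x S) * e"
    using insert by (simp add: algebra_simps)
  finally show ?case .
qed

lemma norm_det_diff_le:
  fixes A B :: "'a::real_normed_field^'n::finite^'n" and M e :: real
  assumes "1 \<le> M" "\<And>i j. norm (A $ i $ j) \<le> M" "\<And>i j. norm (B $ i $ j) \<le> M"
    and "\<And>i j. norm (A $ i $ j - B $ i $ j) \<le> e"
  shows "norm (det A - det B) \<le> fact CARD('n) * (CARD('n) * M ^ CARD('n) * e)"
proof -
  let ?P = "{p. p permutes (UNIV :: 'n set)}"
  have "norm (det A - det B)
      = norm (\<Sum>p\<in>?P. of_int (sign p) * ((\<Prod>i\<in>UNIV. A $ i $ p i) - (\<Prod>i\<in>UNIV. B $ i $ p i)))"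
    unfolding det_def by (simp add: sum_subtractf algebra_simps)
  also have "\<dots> \<le> (\<Sum>p\<in>?P. norm ((\<Prod>i\<in>UNIV. A $ i $ p i) - (\<Prod>i\<in>UNIV. B $ i $ p i)))"
    by (rule order_trans[OF norm_sum], rule sum_mono) (simp add: norm_mult sign_def)
  also have "\<dots> \<le> (\<Sum>p\<in>?P. CARD('n) * M ^ CARD('n) * e)"
    by (intro sum_mono norm_prod_diff_le) (use assms in auto)
  also have "\<dots> = fact CARD('n) * (CARD('n) * M ^ CARD('n) * e)"
    by (simp add: card_permutations)
  finally show ?thesis .
qed

abbreviation entrywise_l1_norm :: "('k::finite \<Rightarrow> complex^'k) \<Rightarrow> real" where
  "entrywise_l1_norm W \<equiv> \<Sum>k\<in>UNIV. \<Sum>j\<in>UNIV. cmod (W k $ j)"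

lemma norm_herm_inner_le_entrywise_l1_norm:
  fixes W :: "'k::finite \<Rightarrow> complex^'k"
  shows "cmod (herm_inner (W k) u) \<le> entrywise_l1_norm W * norm u"
proof -
  have "(\<Sum>j\<in>UNIV. cmod (W k $ j)) \<le> entrywise_l1_norm W"
    by (rule member_le_sum) (auto intro: sum_nonneg)
  with norm_herm_inner_le[of "W k" u] show ?thesis
    by (meson mult_right_mono norm_ge_zero order_trans)
qed

lemma norm_gram_matrix_entry_le:
  fixes W :: "'k::finite \<Rightarrow> complex^'k"
  assumes "\<And>l. l \<in> I \<Longrightarrow> norm (U l) \<le> B"
  shows "cmod (gram_matrix I W U $ k $ l) \<le> entrywise_l1_norm W * \<bar>B\<bar> + 1"
proof (cases "k \<in> I \<and> l \<in> I")
  case True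
  have "cmod (herm_inner (W k) (U l)) \<le> entrywise_l1_norm W * \<bar>B\<bar>"
    using norm_herm_inner_le_entrywise_l1_norm[of W k "U l"] assms[of l] True
    by (smt (verit) mult_left_mono sum_nonneg norm_ge_zero)
  then show ?thesis using True by (simp add: gram_matrix_def)
qed (auto simp: gram_matrix_def sum_nonneg)

lemma norm_gram_matrix_entry_diff_le:
  fixes W :: "'k::finite \<Rightarrow> complex^'k"
  assumes "\<And>l. l \<in> I \<Longrightarrow> norm (U l - U' l) \<le> e" "0 \<le> e"
  shows "cmod (gram_matrix I W U $ k $ l - gram_matrix I W U' $ k $ l) \<le> entrywise_l1_norm W * e"
proof (cases "k \<in> I \<and> l \<in> I")
  case True
  have "cmod (herm_inner (W k) (U l - U' l)) \<le> entrywise_l1_norm W * e"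
    using norm_herm_inner_le_entrywise_l1_norm[of W k "U l - U' l"] assms(1)[of l] True
    by (smt (verit) mult_left_mono sum_nonneg norm_ge_zero)
  then show ?thesis using True by (simp add: gram_matrix_def herm_inner_diff_right)
qed (use assms(2) in \<open>auto simp: gram_matrix_def sum_nonneg\<close>)

lemma det_gram_matrix_lipschitz:
  fixes W :: "'k::finite \<Rightarrow> complex^'k"
  obtains K where "\<And>U U' e. (\<And>l. l \<in> I \<Longrightarrow> norm (U l) \<le> B) \<Longrightarrow> (\<And>l. l \<in> I \<Longrightarrow> norm (U' l) \<le> B)
      \<Longrightarrow> (\<And>l. l \<in> I \<Longrightarrow> norm (U l - U' l) \<le> e) \<Longrightarrow> 0 \<le> e
      \<Longrightarrow> cmod (det (gram_matrix I W U) - det (gram_matrix I W U')) \<le> K * e"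
proof
  let ?M = "entrywise_l1_norm W * \<bar>B\<bar> + 1"
  fix U U' :: "'k \<Rightarrow> complex^'k" and e :: real
  assume U: "\<And>l. l \<in> I \<Longrightarrow> norm (U l) \<le> B" and U': "\<And>l. l \<in> I \<Longrightarrow> norm (U' l) \<le> B"
    and UU': "\<And>l. l \<in> I \<Longrightarrow> norm (U l - U' l) \<le> e" and e: "0 \<le> e"
  have "1 \<le> ?M" by (simp add: sum_nonneg)
  from norm_det_diff_le[OF this norm_gram_matrix_entry_le[OF U] norm_gram_matrix_entry_le[OF U']
      norm_gram_matrix_entry_diff_le[OF UU' e]]
  show "cmod (det (gram_matrix I W U) - det (gram_matrix I W U'))
      \<le> (fact CARD('k) * (CARD('k) * ?M ^ CARD('k) * entrywise_l1_norm W)) * e"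
    by (simp add: mult_ac)
qed

section \<open>Dimension of the span\<close>

lemma independent_image_if_scalars_zero:
  fixes U :: "'k::finite \<Rightarrow> complex^'n"
  assumes indep: "\<And>c l. (\<Sum>l\<in>I. c l *s U l) = 0 \<Longrightarrow> l \<in> I \<Longrightarrow> c l = 0"
  shows "inj_on U I" and "vec.independent (U ` I)"
proof -
  show inj: "inj_on U I"
  proof (rule inj_onI, rule ccontr)
    fix a b assume ab: "a \<in> I" "b \<in> I" "U a = U b" "a \<noteq> b"
    define c :: "'k \<Rightarrow> complex" where "c l = (if l = a then 1 else if l = b then -1 else 0)" for l
    have "(\<Sum>l\<in>I. c l *s U l) = (\<Sum>l\<in>{a, b}. c l *s U l)"
      by (rule sum.mono_neutral_right) (use ab in \<open>auto simp: c_def\<close>)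
    also have "\<dots> = 0" using ab by (simp add: c_def)
    finally have "c a = 0" using indep ab(1) by blast
    then show False by (simp add: c_def)
  qed
  show "vec.independent (U ` I)"
  proof (rule vec.independent_if_scalars_zero)
    fix f u assume "(\<Sum>u\<in>U ` I. f u *s u) = 0" "u \<in> U ` I"
    then show "f u = 0"
      using indep[of "\<lambda>l. f (U l)"] by (auto simp: sum.reindex[OF inj])
  qed simp
qed

lemma scalars_zero_if_independent_image:
  fixes U :: "'k \<Rightarrow> complex^'n::finite"
  assumes "inj_on U I" "vec.independent (U ` I)" "(\<Sum>l\<in>I. c l *s U l) = 0" "l \<in> I"
  shows "c l = 0"
proof -
  have "(\<Sum>u\<in>U ` I. c (the_inv_into I U u) *s u) = 0"
    using assms(1,3) by (simp add: sum.reindex the_inv_into_f_f)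
  then have "c (the_inv_into I U (U l)) = 0"
    by (rule vec.independentD[OF assms(2) vec.finiteI_independent[OF assms(2)] order.refl,
          where u = "\<lambda>u. c (the_inv_into I U u)"]) (use assms(4) in blast)
  then show ?thesis using the_inv_into_f_f[OF assms(1,4)] by simp
qed

lemma card_le_span_dim_if_det_gram_nonzero:
  fixes v :: "'a \<Rightarrow> real^'m::finite \<Rightarrow> complex^'k::finite"
  assumes "det (gram_matrix I W (\<lambda>l. v (al l) x)) \<noteq> 0" "al ` I \<subseteq> A"
  shows "card I \<le> span_dim v A x"
proof -
  let ?U = "\<lambda>l. v (al l) x"
  have indep: "c l = 0" if "(\<Sum>l\<in>I. c l *s ?U l) = 0" "l \<in> I" for c l
    using independent_family_if_det_gram_nonzero[OF assms(1) that] .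
  have inj: "inj_on ?U I"
    by (rule independent_image_if_scalars_zero(1)) (fact indep)
  have ind: "vec.independent (?U ` I)"
    by (rule independent_image_if_scalars_zero(2)) (fact indep)
  have "?U ` I \<subseteq> vec.span ((\<lambda>\<alpha>. v \<alpha> x) ` A)"
    using assms(2) by (auto intro: vec.span_base)
  then have "card (?U ` I) \<le> span_dim v A x"
    unfolding span_dim_def using ind by (rule vec.independent_card_le_dim)
  then show ?thesis
    using card_image[OF inj] by simp
qed

lemma obtain_independent_subfamily:
  fixes v :: "'a \<Rightarrow> real^'m::finite \<Rightarrow> complex^'k::finite"
  assumes "n \<le> span_dim v A x"
  obtains I :: "'k set" and al where "card I = n" "al ` I \<subseteq> A"
    "inj_on (\<lambda>l. v (al l) x) I" "vec.independent ((\<lambda>l. v (al l) x) ` I)"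
proof -
  let ?V = "(\<lambda>\<alpha>. v \<alpha> x) ` A"
  obtain B where B: "B \<subseteq> ?V" "vec.independent B" "card B = vec.dim ?V"
    by (rule vec.basis_exists)
  have "n \<le> card B" using assms B(3) by (simp add: span_dim_def vec.dim_span)
  then obtain B' where B': "B' \<subseteq> B" "card B' = n"
    by (metis obtain_subset_with_card_n)
  have iB': "vec.independent B'" using B(2) B'(1) by (rule vec.independent_mono)
  have "n \<le> vec.dim (UNIV :: (complex^'k) set)"
    using B'(2) vec.independent_card_le_dim[OF _ iB'] by blast
  then have "n \<le> CARD('k)"
    using dim_subset_UNIV_cart_gen[of "UNIV :: (complex^'k) set"] by linarith
  then obtain I :: "'k set" where I: "card I = n"
    by (metis obtain_subset_with_card_n)
  obtain e where e: "bij_betw e I B'"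
    using finite_same_card_bij[OF finite vec.finiteI_independent[OF iB']] I B'(2) by metis
  have eB: "e l \<in> (\<lambda>\<alpha>. v \<alpha> x) ` A" if "l \<in> I" for l
    using bij_betwE[OF e] that B'(1) B(1) by blast
  define al where "al l = inv_into A (\<lambda>\<alpha>. v \<alpha> x) (e l)" for l
  have al: "al l \<in> A" "v (al l) x = e l" if "l \<in> I" for l
    using inv_into_into[OF eB[OF that]] f_inv_into_f[OF eB[OF that]] by (simp_all add: al_def)
  have inj: "inj_on (\<lambda>l. v (al l) x) I"
    using bij_betw_imp_inj_on[OF e] inj_on_cong[of I "\<lambda>l. v (al l) x" e] al(2) by simp
  have img: "(\<lambda>l. v (al l) x) ` I = B'"
    using bij_betw_imp_surj_on[OF e] image_cong[of I I "\<lambda>l. v (al l) x" e] al(2) by simp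
  show ?thesis
    using I al(1) inj iB' img by (intro that[of I al]) auto
qed

lemma obtain_gram_nonzero_family:
  fixes v :: "'a \<Rightarrow> real^'m::finite \<Rightarrow> complex^'k::finite"
  assumes "n \<le> span_dim v A x"
  obtains I :: "'k set" and al where "card I = n" "al ` I \<subseteq> A"
    "det (gram_matrix I (\<lambda>l. v (al l) x) (\<lambda>l. v (al l) x)) \<noteq> 0"
proof -
  obtain I :: "'k set" and al where I: "card I = n" "al ` I \<subseteq> A"
    and inj: "inj_on (\<lambda>l. v (al l) x) I" and ind: "vec.independent ((\<lambda>l. v (al l) x) ` I)"
    by (rule obtain_independent_subfamily[OF assms])
  have "det (gram_matrix I (\<lambda>l. v (al l) x) (\<lambda>l. v (al l) x)) \<noteq> 0"
    by (rule det_gram_self_nonzero, rule scalars_zero_if_independent_image[OF inj ind])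
  with I that show ?thesis by blast
qed

lemma isCont_eventually_nonzero:
  fixes f :: "'a::t2_space \<Rightarrow> 'b::{t2_space,zero}"
  assumes "isCont f x" "f x \<noteq> 0"
  shows "\<forall>\<^sub>F y in nhds x. f y \<noteq> 0"
  using tendsto_at_iff_tendsto_nhds[THEN iffD1, OF assms(1)[unfolded isCont_def]] assms(2)
  by (rule tendsto_imp_eventually_ne)

lemma span_dim_lower_semicontinuous:
  fixes v :: "'a \<Rightarrow> real^'m::finite \<Rightarrow> complex^'k::finite"
  assumes "\<And>\<alpha>. \<alpha> \<in> A \<Longrightarrow> isCont (v \<alpha>) x0"
  shows "\<forall>\<^sub>F x in nhds x0. span_dim v A x0 \<le> span_dim v A x"
proof -
  obtain I :: "'k set" and al where I: "card I = span_dim v A x0" "al ` I \<subseteq> A"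
    and det0: "det (gram_matrix I (\<lambda>l. v (al l) x0) (\<lambda>l. v (al l) x0)) \<noteq> 0"
    by (rule obtain_gram_nonzero_family[OF order.refl])
  let ?g = "\<lambda>x. det (gram_matrix I (\<lambda>l. v (al l) x0) (\<lambda>l. v (al l) x))"
  have "isCont ?g x0"
    by (rule isCont_det_gram_matrix) (use assms I(2) in auto)
  then have "\<forall>\<^sub>F x in nhds x0. ?g x \<noteq> 0"
    using det0 by (rule isCont_eventually_nonzero)
  then show ?thesis
    by (rule eventually_mono) (use card_le_span_dim_if_det_gram_nonzero I in metis)
qed

lemma obtain_higher_span_dim_near_0:
  fixes v :: "'a \<Rightarrow> real^'m::finite \<Rightarrow> complex^'k::finite"
  assumes "\<And>\<alpha>. \<alpha> \<in> A \<Longrightarrow> isCont (v \<alpha>) 0" "dim_nonconstant_near_0 v A D"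
    and "open S" "0 \<in> S" "S \<subseteq> D"
  obtains x1 where "x1 \<in> S" "span_dim v A 0 < span_dim v A x1"
proof -
  have "\<forall>\<^sub>F x in nhds 0. span_dim v A 0 \<le> span_dim v A x"
    by (rule span_dim_lower_semicontinuous) (rule assms(1))
  then obtain \<rho> where \<rho>: "\<rho> > 0" and lsc: "\<And>x. dist x 0 < \<rho> \<Longrightarrow> span_dim v A 0 \<le> span_dim v A x"
    unfolding eventually_nhds_metric by auto
  have "open (S \<inter> ball 0 \<rho>)" "0 \<in> S \<inter> ball 0 \<rho>" "S \<inter> ball 0 \<rho> \<subseteq> D"
    using assms(3-5) \<rho> by auto
  from assms(2)[unfolded dim_nonconstant_near_0_def, rule_format, OF this]
  obtain x y where xy: "x \<in> S \<inter> ball 0 \<rho>" "y \<in> S \<inter> ball 0 \<rho>" "span_dim v A x \<noteq> span_dim v A y"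
    by blast
  have "span_dim v A 0 \<le> span_dim v A x" "span_dim v A 0 \<le> span_dim v A y"
    using xy(1,2) lsc by (auto simp: dist_commute)
  with xy(3) consider "span_dim v A 0 < span_dim v A x" | "span_dim v A 0 < span_dim v A y"
    by linarith
  then show ?thesis using xy(1,2) that by (cases) auto
qed

lemma eventually_scaleR_in_open:
  fixes x :: "'a::real_normed_vector"
  assumes "open S" "0 \<in> S"
  shows "\<forall>\<^sub>F t in at_right 0. t *\<^sub>R x \<in> S"
proof -
  have "((\<lambda>t. t *\<^sub>R x) \<longlongrightarrow> 0 *\<^sub>R x) (at_right 0)" by (intro tendsto_intros)
  from topological_tendstoD[OF this assms(1)] assms(2) show ?thesis by simp
qed

lemma dim_nonconstant_near_0I:
  fixes v :: "'a \<Rightarrow> real^'m::finite \<Rightarrow> complex^'k::finite" and x1 :: "real^'m"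
  assumes "\<forall>\<^sub>F t in at_right 0. span_dim v A 0 < span_dim v A (t *\<^sub>R x1)"
  shows "dim_nonconstant_near_0 v A D"
  unfolding dim_nonconstant_near_0_def
proof (intro allI impI)
  fix U :: "(real^'m) set" assume U: "open U" "0 \<in> U"
  have "\<forall>\<^sub>F t in at_right 0. t *\<^sub>R x1 \<in> U \<and> span_dim v A 0 < span_dim v A (t *\<^sub>R x1)"
    using eventually_scaleR_in_open[OF U] assms by (rule eventually_conj)
  then obtain t where "t *\<^sub>R x1 \<in> U" "span_dim v A 0 < span_dim v A (t *\<^sub>R x1)"
    using eventually_happens'[OF trivial_limit_at_right_real] by blast
  then show "\<exists>x\<in>U. \<exists>y\<in>U. span_dim v A x \<noteq> span_dim v A y"
    using U(2) by (metis less_irrefl)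
qed

section \<open>Functions of a real variable with a holomorphic extension\<close>

text \<open>For \<open>g : \<real> \<rightarrow> \<complex>\<close> this is real-analyticity at \<open>t0\<close>, stated in the form to which the
  identity theorem and zero orders of holomorphic functions apply.\<close>

definition extends_holomorphically_at :: "(real \<Rightarrow> complex) \<Rightarrow> real \<Rightarrow> bool" where
  "extends_holomorphically_at g t0 \<longleftrightarrow>
     (\<exists>G. G analytic_on {complex_of_real t0} \<and> (\<forall>\<^sub>F t in nhds t0. G (of_real t) = g t))"

lemma extends_holomorphically_at_const: "extends_holomorphically_at (\<lambda>_. c) t0"
  unfolding extends_holomorphically_at_def by (intro exI[of _ "\<lambda>_. c"]) auto

lemma extends_holomorphically_at_add:
  assumes "extends_holomorphically_at f t0" "extends_holomorphically_at g t0"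
  shows "extends_holomorphically_at (\<lambda>t. f t + g t) t0"
proof -
  obtain F G where "F analytic_on {of_real t0}" "G analytic_on {of_real t0}"
    and "\<forall>\<^sub>F t in nhds t0. F (of_real t) = f t" "\<forall>\<^sub>F t in nhds t0. G (of_real t) = g t"
    using assms unfolding extends_holomorphically_at_def by blast
  then show ?thesis
    unfolding extends_holomorphically_at_def
    by (intro exI[of _ "\<lambda>z. F z + G z"] conjI analytic_intros) (auto elim: eventually_elim2)
qed

lemma extends_holomorphically_at_mult:
  assumes "extends_holomorphically_at f t0" "extends_holomorphically_at g t0"
  shows "extends_holomorphically_at (\<lambda>t. f t * g t) t0"
proof -
  obtain F G where "F analytic_on {of_real t0}" "G analytic_on {of_real t0}"
    and "\<forall>\<^sub>F t in nhds t0. F (of_real t) = f t" "\<forall>\<^sub>F t in nhds t0. G (of_real t) = g t"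
    using assms unfolding extends_holomorphically_at_def by blast
  then show ?thesis
    unfolding extends_holomorphically_at_def
    by (intro exI[of _ "\<lambda>z. F z * G z"] conjI analytic_intros) (auto elim: eventually_elim2)
qed

lemma extends_holomorphically_at_sum:
  assumes "\<And>i. i \<in> S \<Longrightarrow> extends_holomorphically_at (f i) t0"
  shows "extends_holomorphically_at (\<lambda>t. \<Sum>i\<in>S. f i t) t0"
  using assms
  by (induction S rule: infinite_finite_induct)
    (simp_all add: extends_holomorphically_at_const extends_holomorphically_at_add)

lemma extends_holomorphically_at_prod:
  assumes "\<And>i. i \<in> S \<Longrightarrow> extends_holomorphically_at (f i) t0"
  shows "extends_holomorphically_at (\<lambda>t. \<Prod>i\<in>S. f i t) t0"
  using assms
  by (induction S rule: infinite_finite_induct)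
    (simp_all add: extends_holomorphically_at_const extends_holomorphically_at_mult)

lemma extends_holomorphically_at_det:
  fixes M :: "real \<Rightarrow> complex^'n::finite^'n"
  assumes "\<And>i j. extends_holomorphically_at (\<lambda>t. M t $ i $ j) t0"
  shows "extends_holomorphically_at (\<lambda>t. det (M t)) t0"
  unfolding det_def
  by (intro extends_holomorphically_at_sum extends_holomorphically_at_mult
      extends_holomorphically_at_prod extends_holomorphically_at_const assms)

lemma analytic_at_vanishes_or_factors:
  assumes "G analytic_on {z0}"
  obtains "\<forall>\<^sub>F z in nhds z0. G z = 0"
    | d h where "isCont h z0" "h z0 \<noteq> 0" "\<forall>\<^sub>F z in nhds z0. G z = (z - z0) ^ d * h z"
proof -
  obtain R where R: "R > 0" "G holomorphic_on ball z0 R"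
    using assms analytic_at_ball by blast
  show ?thesis
  proof (cases "\<exists>w\<in>ball z0 R. G w \<noteq> 0")
    case False
    then have "\<forall>\<^sub>F z in nhds z0. G z = 0"
      using R(1) eventually_nhds_metric[of _ z0] by (auto simp: dist_commute)
    then show ?thesis by (rule that(1))
  next
    case True
    then obtain r where r: "r > 0" "cball z0 r \<subseteq> ball z0 R"
      and h: "zor_poly G z0 holomorphic_on cball z0 r"
      and fac: "\<forall>w\<in>cball z0 r. G w = zor_poly G z0 w * (w - z0) ^ nat (zorder G z0)
                  \<and> zor_poly G z0 w \<noteq> 0"
      using conjunct2[OF zorder_exist_zero[OF R(2) open_ball connected_ball _ True]] R(1)
      by (metis centre_in_ball)
    have "isCont (zor_poly G z0) z0"
      using holomorphic_on_imp_continuous_on[OF holomorphic_on_subset[OF h ball_subset_cball]] r(1)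
      by (simp add: continuous_on_eq_continuous_at)
    moreover have "\<forall>\<^sub>F z in nhds z0. G z = (z - z0) ^ nat (zorder G z0) * zor_poly G z0 z"
      using r(1) fac eventually_nhds_metric[of _ z0] by (auto simp: dist_commute mult.commute)
    ultimately show ?thesis using fac r(1) that(2) by auto
  qed
qed

lemma eventually_nhds_of_real:
  assumes "\<forall>\<^sub>F z in nhds (complex_of_real t0). P z"
  shows "\<forall>\<^sub>F t in nhds t0. P (complex_of_real t)"
proof -
  have "filterlim complex_of_real (nhds (complex_of_real t0)) (nhds t0)"
    by (intro tendsto_intros filterlim_ident)
  with assms show ?thesis by (simp add: filterlim_iff)
qed

lemma extends_holomorphically_vanishing_from_left:
  assumes "extends_holomorphically_at g t0" "\<forall>\<^sub>F t in at_left t0. g t = 0"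
  shows "\<forall>\<^sub>F t in nhds t0. g t = 0"
proof -
  obtain G where G: "G analytic_on {of_real t0}" and Gg: "\<forall>\<^sub>F t in nhds t0. G (of_real t) = g t"
    using assms(1) unfolding extends_holomorphically_at_def by blast
  from G show ?thesis
  proof (cases rule: analytic_at_vanishes_or_factors)
    case 1
    from eventually_nhds_of_real[OF this] Gg show ?thesis by eventually_elim simp
  next
    case (2 d h)
    have "\<forall>\<^sub>F z in nhds (of_real t0). h z \<noteq> 0"
      using 2(1,2) by (rule isCont_eventually_nonzero)
    with 2(3) have "\<forall>\<^sub>F z in nhds (of_real t0). G z = (z - of_real t0) ^ d * h z \<and> h z \<noteq> 0"
      by eventually_elim simp
    from eventually_nhds_of_real[OF this] Gg
    have "\<forall>\<^sub>F t in nhds t0. t \<noteq> t0 \<longrightarrow> g t \<noteq> 0"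
      by eventually_elim simp
    then have "\<forall>\<^sub>F t in at_left t0. g t \<noteq> 0"
      unfolding eventually_at_filter by eventually_elim auto
    with assms(2) have "\<forall>\<^sub>F t in at_left t0. False"
      by eventually_elim simp
    then show ?thesis by simp
  qed
qed

lemma extends_holomorphically_lower_bound_at_0:
  assumes "extends_holomorphically_at g 0" "\<not> (\<forall>\<^sub>F t in at_right 0. g t = 0)"
  obtains c d where "c > 0" "\<forall>\<^sub>F t in at_right 0. c * t ^ d \<le> cmod (g t)"
proof -
  obtain G where G: "G analytic_on {0}" and Gg: "\<forall>\<^sub>F t in nhds 0. G (of_real t) = g t"
    using assms(1) unfolding extends_holomorphically_at_def by auto
  from G show ?thesis
  proof (cases rule: analytic_at_vanishes_or_factors)
    case 1
    from eventually_nhds_of_real[of _ 0, simplified, OF this] Gg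
    have "\<forall>\<^sub>F t in nhds 0. g t = 0" by eventually_elim simp
    then show ?thesis
      using assms(2) filter_leD[OF at_within_le_nhds] by blast
  next
    case (2 d h)
    have "((\<lambda>z. cmod (h z)) \<longlongrightarrow> cmod (h 0)) (nhds 0)"
      using 2(1) by (intro tendsto_norm) (simp add: isCont_def tendsto_at_iff_tendsto_nhds)
    then have "\<forall>\<^sub>F z in nhds 0. cmod (h 0) / 2 < cmod (h z)"
      by (rule order_tendstoD) (simp add: 2(2))
    with 2(3) have "\<forall>\<^sub>F z in nhds 0. cmod (h 0) / 2 < cmod (h z) \<and> G z = z ^ d * h z"
      by eventually_elim simp
    from eventually_nhds_of_real[of _ 0, simplified, OF this] Gg
    have "\<forall>\<^sub>F t in nhds 0. 0 \<le> t \<longrightarrow> cmod (h 0) / 2 * t ^ d \<le> cmod (g t)"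
    proof eventually_elim
      case (elim t)
      then have "cmod (g t) = cmod (h (of_real t)) * \<bar>t\<bar> ^ d"
        by (simp add: norm_mult norm_power)
      moreover have "cmod (h 0) / 2 * t ^ d \<le> cmod (h (of_real t)) * t ^ d" if "0 \<le> t"
        using elim(1) that by (intro mult_right_mono) auto
      ultimately show ?case by simp
    qed
    then have "\<forall>\<^sub>F t in at_right 0. cmod (h 0) / 2 * t ^ d \<le> cmod (g t)"
      unfolding eventually_at_filter by eventually_elim auto
    with 2(2) show ?thesis using that by (metis half_gt_zero zero_less_norm_iff)
  qed
qed

lemma extends_holomorphically_vanishing_on_interval:
  assumes hol: "\<And>t. t \<in> {0..1} \<Longrightarrow> extends_holomorphically_at g t"
    and zero: "\<forall>\<^sub>F t in at_right 0. g t = 0"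
  shows "g 1 = 0"
proof -
  define Z where "Z = {s \<in> {0..1}. \<forall>t\<in>{0<..<s}. g t = 0}"
  define s where "s = Sup Z"
  have bdd: "bdd_above Z" by (auto simp: Z_def bdd_above_def)
  obtain b where b: "b > 0" "\<And>t. 0 < t \<Longrightarrow> t < b \<Longrightarrow> g t = 0"
    using zero unfolding eventually_at_right_field by auto
  have "min b 1 \<in> Z" using b by (auto simp: Z_def)
  then have s_pos: "0 < s" using b bdd cSup_upper[of "min b 1" Z] by (simp add: s_def)
  have s_le: "s \<le> 1" using \<open>min b 1 \<in> Z\<close> by (auto simp: s_def Z_def intro!: cSup_least)
  have below: "g t = 0" if "0 < t" "t < s" for t
  proof -
    obtain z where "z \<in> Z" "t < z" using \<open>t < s\<close> \<open>min b 1 \<in> Z\<close> bdd less_cSupD s_def by blast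
    then show ?thesis using that by (auto simp: Z_def)
  qed
  have "\<forall>\<^sub>F t in at_left s. g t = 0"
    using s_pos by (intro eventually_at_leftI[of 0]) (auto simp: below)
  then have "\<forall>\<^sub>F t in nhds s. g t = 0"
    using hol s_pos s_le by (intro extends_holomorphically_vanishing_from_left) auto
  then obtain \<delta> where \<delta>: "\<delta> > 0" "\<And>t. \<bar>t - s\<bar> < \<delta> \<Longrightarrow> g t = 0"
    unfolding eventually_nhds_metric dist_real_def by blast
  have "min 1 (s + \<delta> / 2) \<in> Z"
    using s_pos s_le \<delta> below by (fastforce simp: Z_def)
  then have "min 1 (s + \<delta> / 2) \<le> s" unfolding s_def using bdd by (rule cSup_upper)
  then have "s = 1" using s_le \<delta>(1) by linarith
  then show ?thesis using \<delta> by simp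
qed

lemma extends_holomorphically_polynomial_lower_bound:
  assumes "\<And>t. t \<in> {0..1} \<Longrightarrow> extends_holomorphically_at g t" "g 1 \<noteq> 0"
  obtains c d where "c > 0" "\<forall>\<^sub>F t in at_right 0. c * t ^ d \<le> cmod (g t)"
proof -
  have "extends_holomorphically_at g 0" using assms(1) by simp
  moreover have "\<not> (\<forall>\<^sub>F t in at_right 0. g t = 0)"
    using extends_holomorphically_vanishing_on_interval[OF assms(1)] assms(2) by blast
  ultimately show ?thesis using that by (rule extends_holomorphically_lower_bound_at_0)
qed

section \<open>Real-analytic maps\<close>

definition multipow :: "real^'m \<Rightarrow> ('m \<Rightarrow> nat) \<Rightarrow> real" where
  "multipow x \<beta> = (\<Prod>i\<in>UNIV. x $ i ^ \<beta> i)"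

definition multidegree :: "('m \<Rightarrow> nat) \<Rightarrow> nat" where
  "multidegree \<beta> = (\<Sum>i\<in>UNIV. \<beta> i)"

lemma multipow_scaleR: "multipow (s *\<^sub>R x) \<beta> = s ^ multidegree \<beta> * multipow (x::real^'m::finite) \<beta>"
  by (simp add: multipow_def multidegree_def power_mult_distrib prod.distrib power_sum)

lemma multipow_zero: "multipow (0::real^'m::finite) \<beta> = (if \<beta> = (\<lambda>_. 0) then 1 else 0)"
  by (auto simp: multipow_def fun_eq_iff zero_power prod_zero)

lemma abs_multipow_le:
  fixes x :: "real^'m::finite"
  assumes "norm x \<le> a"
  shows "\<bar>multipow x \<beta>\<bar> \<le> a ^ multidegree \<beta>"
proof -
  have "\<bar>multipow x \<beta>\<bar> = (\<Prod>i\<in>UNIV. \<bar>x $ i\<bar> ^ \<beta> i)"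
    by (simp add: multipow_def abs_prod power_abs)
  also have "\<dots> \<le> (\<Prod>i\<in>UNIV. a ^ \<beta> i)"
    using assms component_le_norm_cart[of x] by (intro prod_mono conjI power_mono) (auto intro: order_trans)
  also have "\<dots> = a ^ multidegree \<beta>" by (simp add: multidegree_def power_sum)
  finally show ?thesis .
qed

lemma le_multidegree: "\<beta> i \<le> multidegree (\<beta> :: 'm::finite \<Rightarrow> nat)"
  unfolding multidegree_def by (rule member_le_sum) auto

lemma multidegree_pos: "\<beta> \<noteq> (\<lambda>_. 0) \<Longrightarrow> 0 < multidegree (\<beta> :: 'm::finite \<Rightarrow> nat)"
proof -
  assume "\<beta> \<noteq> (\<lambda>_. 0)"
  then obtain i where "\<beta> i \<noteq> 0" by auto
  with le_multidegree[of \<beta> i] show ?thesis by linarith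
qed

lemma finite_multidegree_eq: "finite {\<beta> :: 'm::finite \<Rightarrow> nat. multidegree \<beta> = n}"
proof (rule finite_subset)
  show "{\<beta> :: 'm \<Rightarrow> nat. multidegree \<beta> = n} \<subseteq> Pi\<^sub>E UNIV (\<lambda>_. {..n})"
  proof
    fix \<beta> :: "'m \<Rightarrow> nat" assume "\<beta> \<in> {\<beta>. multidegree \<beta> = n}"
    then show "\<beta> \<in> Pi\<^sub>E UNIV (\<lambda>_. {..n})"
      using le_multidegree[of \<beta>] by (simp add: PiE_UNIV_domain)
  qed
qed (rule finite_PiE, auto)

lemma has_sum_group_by_multidegree:
  fixes g :: "('m::finite \<Rightarrow> nat) \<Rightarrow> 'b::{topological_comm_monoid_add,t3_space}"
  assumes "(g has_sum S) UNIV"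
  shows "((\<lambda>n. \<Sum>\<beta> | multidegree \<beta> = n. g \<beta>) has_sum S) UNIV"
proof -
  have "((\<lambda>p. g (snd p)) has_sum S) (Sigma UNIV (\<lambda>n. {\<beta>. multidegree \<beta> = n}))"
    using assms
    by (subst has_sum_reindex_bij_witness[where j = snd and i = "\<lambda>\<beta>. (multidegree \<beta>, \<beta>)"
          and g = "\<lambda>p. g (snd p)" and h = g and s' = S]) auto
  then show ?thesis
    by (rule has_sum_SigmaD) (simp add: finite_multidegree_eq)
qed

lemma real_analytic_at_component:
  fixes f :: "real^'m::finite \<Rightarrow> complex^'k::finite"
  assumes "real_analytic_at f x0"
  obtains r c where "r > 0"
    "\<And>x. x \<in> ball x0 r \<Longrightarrow> ((\<lambda>\<beta>. multipow (x - x0) \<beta> *\<^sub>R c \<beta>) has_sum f x $ j) UNIV"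
proof -
  obtain r and c :: "('m \<Rightarrow> nat) \<Rightarrow> complex^'k" where "r > 0" and
    hs: "\<forall>x\<in>ball x0 r. ((\<lambda>\<alpha>. (\<Prod>i\<in>UNIV. (x$i - x0$i) ^ (\<alpha> i)) *\<^sub>R c \<alpha>) has_sum f x) UNIV"
    using assms unfolding real_analytic_at_def by blast
  have "((\<lambda>\<beta>. multipow (x - x0) \<beta> *\<^sub>R c \<beta> $ j) has_sum f x $ j) UNIV" if "x \<in> ball x0 r" for x
    using has_sum_bounded_linear[OF bounded_linear_vec_nth hs[rule_format, OF that]]
    by (simp add: multipow_def)
  with \<open>r > 0\<close> show ?thesis by (rule that[of r "\<lambda>\<beta>. c \<beta> $ j"])
qed

lemma norm_multipow_series_increment_le:
  fixes c :: "('m::finite \<Rightarrow> nat) \<Rightarrow> complex"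
  assumes M: "((\<lambda>\<beta>. s ^ multidegree \<beta> * cmod (c \<beta>)) has_sum M) UNIV" and s: "0 < s"
    and h: "((\<lambda>\<beta>. multipow h \<beta> *\<^sub>R c \<beta>) has_sum g1) UNIV" "norm h \<le> s"
    and 0: "((\<lambda>\<beta>. multipow 0 \<beta> *\<^sub>R c \<beta>) has_sum g0) UNIV"
  shows "cmod (g1 - g0) \<le> norm h / s * M"
proof -
  define l where "l = norm h / s"
  have l: "0 \<le> l" "l \<le> 1" "norm h = l * s" using h(2) s by (auto simp: l_def)
  have "((\<lambda>\<beta>. multipow h \<beta> *\<^sub>R c \<beta> + - (multipow 0 \<beta> *\<^sub>R c \<beta>)) has_sum g1 + - g0) UNIV"
    using h(1) 0 by (intro has_sum_add) (auto simp: has_sum_uminus)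
  moreover have "((\<lambda>\<beta>. l * (s ^ multidegree \<beta> * cmod (c \<beta>))) has_sum l * M) UNIV"
    by (rule has_sum_cmult_right[OF M])
  moreover have "cmod (multipow h \<beta> *\<^sub>R c \<beta> + - (multipow 0 \<beta> *\<^sub>R c \<beta>))
      \<le> l * (s ^ multidegree \<beta> * cmod (c \<beta>))" for \<beta>
  proof (cases "\<beta> = (\<lambda>_. 0)")
    case True
    then show ?thesis using l s by (simp add: multipow_def)
  next
    case False
    have "\<bar>multipow h \<beta>\<bar> \<le> (l * s) ^ multidegree \<beta>"
      using l(3) by (intro abs_multipow_le) simp
    also have "\<dots> = l ^ multidegree \<beta> * s ^ multidegree \<beta>" by (simp add: power_mult_distrib)
    also have "\<dots> \<le> l * s ^ multidegree \<beta>"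
      using l s power_decreasing[of 1 "multidegree \<beta>" l] multidegree_pos[OF False]
      by (intro mult_right_mono) auto
    finally show ?thesis using False
      by (simp add: multipow_zero flip: mult.assoc) (simp add: mult_right_mono)
  qed
  ultimately have "cmod (g1 + - g0) \<le> l * M" by (rule norm_infsum_le)
  then show ?thesis by (simp add: l_def)
qed

lemma isCont_multipow_series_center:
  fixes c :: "('m::finite \<Rightarrow> nat) \<Rightarrow> complex"
  assumes "r > 0"
    and hs: "\<And>x. x \<in> ball x0 r \<Longrightarrow> ((\<lambda>\<beta>. multipow (x - x0) \<beta> *\<^sub>R c \<beta>) has_sum g x) UNIV"
  shows "isCont g x0"
proof -
  define s where "s = r / (CARD('m) + 1)"
  have s: "0 < s" "s < r" using assms(1) by (simp_all add: s_def field_simps)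
  define y :: "real^'m" where "y = x0 + s *\<^sub>R (\<chi> i. 1)"
  have "norm (y - x0) \<le> CARD('m) * s"
    using norm_le_l1_cart[of "y - x0"] s by (simp add: y_def)
  also have "\<dots> < r" using assms(1) by (simp add: s_def field_simps)
  finally have "y \<in> ball x0 r" by (simp add: dist_norm norm_minus_commute)
  then have "(\<lambda>\<beta>. multipow (y - x0) \<beta> *\<^sub>R c \<beta>) summable_on UNIV"
    using hs has_sum_imp_summable by blast
  then have "(\<lambda>\<beta>. s ^ multidegree \<beta> * cmod (c \<beta>)) summable_on UNIV"
    using s by (simp add: summable_on_iff_abs_summable_on_complex y_def multipow_scaleR)
      (simp add: multipow_def)
  then obtain M where M: "((\<lambda>\<beta>. s ^ multidegree \<beta> * cmod (c \<beta>)) has_sum M) UNIV"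
    by (auto simp: summable_on_def)
  have "((\<lambda>x. g x - g x0) \<longlongrightarrow> 0) (at x0)"
  proof (rule Lim_null_comparison)
    show "\<forall>\<^sub>F x in at x0. cmod (g x - g x0) \<le> norm (x - x0) / s * M"
      using eventually_at_ball'[OF s(1), of x0 UNIV]
    proof eventually_elim
      case (elim x)
      then have "x \<in> ball x0 r" "norm (x - x0) \<le> s"
        using s by (auto simp: dist_norm norm_minus_commute)
      moreover have "((\<lambda>\<beta>. multipow 0 \<beta> *\<^sub>R c \<beta>) has_sum g x0) UNIV"
        using hs[of x0] assms(1) by simp
      ultimately show ?case
        by (intro norm_multipow_series_increment_le[OF M s(1) hs]) auto
    qed
    have "((\<lambda>x. norm (x - x0) / s * M) \<longlongrightarrow> norm (x0 - x0) / s * M) (at x0)"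
      using s by (intro tendsto_intros) auto
    then show "((\<lambda>x. norm (x - x0) / s * M) \<longlongrightarrow> 0) (at x0)" by simp
  qed
  then show ?thesis unfolding isCont_def by (rule LIM_zero_cancel)
qed

lemma graded_series_extends_holomorphically:
  fixes b :: "('m::finite \<Rightarrow> nat) \<Rightarrow> complex"
  assumes R: "R > 0"
    and hs: "\<And>s. \<bar>s\<bar> < R \<Longrightarrow> ((\<lambda>\<beta>. of_real s ^ multidegree \<beta> * b \<beta>) has_sum F s) UNIV"
  obtains G where "G analytic_on {0}" "\<And>s. \<bar>s\<bar> < R \<Longrightarrow> G (of_real s) = F s"
proof -
  define a where "a n = (\<Sum>\<beta> | multidegree \<beta> = n. b \<beta>)" for n
  have a_scale: "(\<Sum>\<beta> | multidegree \<beta> = n. of_real s ^ multidegree \<beta> * b \<beta>) = a n * of_real s ^ n"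
    for s n
    unfolding a_def sum_distrib_right by (intro sum.cong) (auto simp: mult_ac)
  have sums: "(\<lambda>n. a n * of_real s ^ n) sums F s" if "\<bar>s\<bar> < R" for s
    using has_sum_imp_sums[OF has_sum_group_by_multidegree[OF hs[OF that]]] by (simp only: a_scale)
  have "R \<le> conv_radius a"
  proof (rule conv_radius_geI_ex')
    fix \<rho> :: real assume \<rho>: "0 < \<rho>" "ereal \<rho> < ereal R"
    let ?g = "\<lambda>\<beta>. of_real \<rho> ^ multidegree \<beta> * b \<beta>"
    have "?g summable_on UNIV" using hs[of \<rho>] \<rho> has_sum_imp_summable by auto
    then have "(\<lambda>\<beta>. norm (?g \<beta>)) summable_on UNIV"
      by (simp only: summable_on_iff_abs_summable_on_complex)
    then obtain S where "((\<lambda>\<beta>. norm (?g \<beta>)) has_sum S) UNIV"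
      unfolding summable_on_def by blast
    then have "summable (\<lambda>n. \<Sum>\<beta> | multidegree \<beta> = n. norm (?g \<beta>))"
      by (intro sums_summable has_sum_imp_sums has_sum_group_by_multidegree)
    moreover have "norm (a n * of_real \<rho> ^ n) \<le> (\<Sum>\<beta> | multidegree \<beta> = n. norm (?g \<beta>))" for n
      using norm_sum[of ?g "{\<beta>. multidegree \<beta> = n}"] by (simp only: a_scale)
    ultimately have "summable (\<lambda>n. norm (a n * of_real \<rho> ^ n))"
      by (intro summable_comparison_test[of "\<lambda>n. norm (a n * of_real \<rho> ^ n)"]) auto
    then show "summable (\<lambda>n. a n * of_real \<rho> ^ n)" by (rule summable_norm_cancel)
  qed
  then have "0 < fps_conv_radius (Abs_fps a)"
    using R by (simp add: fps_conv_radius_def) (metis ereal_less(2) order.strict_trans2)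
  then have "eval_fps (Abs_fps a) analytic_on {0}"
    by (intro analytic_on_eval_fps) (auto simp flip: zero_ereal_def)
  moreover have "eval_fps (Abs_fps a) (of_real s) = F s" if "\<bar>s\<bar> < R" for s
    using sums[OF that] by (simp add: eval_fps_def sums_iff)
  ultimately show ?thesis by (rule that)
qed

lemma real_analytic_at_restrict_to_line:
  fixes f :: "real^'m::finite \<Rightarrow> complex^'k::finite"
  assumes "real_analytic_at f (t0 *\<^sub>R x1)"
  shows "extends_holomorphically_at (\<lambda>t. f (t *\<^sub>R x1) $ j) t0"
proof (cases "x1 = 0")
  case True
  then show ?thesis by (simp add: extends_holomorphically_at_const)
next
  case False
  obtain r c where r: "r > 0" and hs: "\<And>x. x \<in> ball (t0 *\<^sub>R x1) r \<Longrightarrow>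
      ((\<lambda>\<beta>. multipow (x - t0 *\<^sub>R x1) \<beta> *\<^sub>R c \<beta>) has_sum f x $ j) UNIV"
    using real_analytic_at_component[OF assms, where j = j] by blast
  define R where "R = r / norm x1"
  have R: "R > 0" using r False by (simp add: R_def)
  have line: "((\<lambda>\<beta>. of_real s ^ multidegree \<beta> * (multipow x1 \<beta> *\<^sub>R c \<beta>)) has_sum f ((t0 + s) *\<^sub>R x1) $ j) UNIV"
    if "\<bar>s\<bar> < R" for s
  proof -
    have "(t0 + s) *\<^sub>R x1 \<in> ball (t0 *\<^sub>R x1) r"
      using that False r by (simp add: dist_norm R_def algebra_simps field_simps)
    moreover have "(t0 + s) *\<^sub>R x1 - t0 *\<^sub>R x1 = s *\<^sub>R x1" by (simp add: algebra_simps)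
    ultimately show ?thesis
      using hs[of "(t0 + s) *\<^sub>R x1"] by (simp add: multipow_scaleR scaleR_conv_of_real[of _ "c _"] mult_ac)
  qed
  obtain G where G: "G analytic_on {0}" and eq: "\<And>s. \<bar>s\<bar> < R \<Longrightarrow> G (of_real s) = f ((t0 + s) *\<^sub>R x1) $ j"
    using graded_series_extends_holomorphically[OF R line] by blast
  have "(\<lambda>z. G (z - of_real t0)) analytic_on {of_real t0}"
    by (rule analytic_on_compose_gen[OF _ G, where f = "\<lambda>z. z - of_real t0", unfolded o_def])
      (auto intro: analytic_intros)
  moreover have "\<forall>\<^sub>F t in nhds t0. G (of_real t - of_real t0) = f (t *\<^sub>R x1) $ j"
    using R eq[of "t - t0" for t] by (auto simp: eventually_nhds_metric dist_real_def)
  ultimately show ?thesis unfolding extends_holomorphically_at_def by blast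
qed

lemma real_analytic_at_imp_isCont:
  fixes f :: "real^'m::finite \<Rightarrow> complex^'k::finite"
  assumes "real_analytic_at f x0"
  shows "isCont f x0"
proof -
  have component: "isCont (\<lambda>x. f x $ j) x0" for j
  proof -
    obtain r c where "r > 0"
      "\<And>x. x \<in> ball x0 r \<Longrightarrow> ((\<lambda>\<beta>. multipow (x - x0) \<beta> *\<^sub>R c \<beta>) has_sum f x $ j) UNIV"
      using real_analytic_at_component[OF assms, where j = j] by blast
    then show ?thesis by (rule isCont_multipow_series_center)
  qed
  show ?thesis
    unfolding isCont_def by (rule vec_tendstoI) (use component in \<open>simp add: isCont_def\<close>)
qed

lemma extends_holomorphically_det_gram_on_line:
  fixes U :: "'k::finite \<Rightarrow> real^'m::finite \<Rightarrow> complex^'k"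
  assumes "\<And>l. l \<in> I \<Longrightarrow> real_analytic_at (U l) (t0 *\<^sub>R x1)"
  shows "extends_holomorphically_at (\<lambda>t. det (gram_matrix I W (\<lambda>l. U l (t *\<^sub>R x1)))) t0"
proof (rule extends_holomorphically_at_det)
  fix k l
  show "extends_holomorphically_at (\<lambda>t. gram_matrix I W (\<lambda>l. U l (t *\<^sub>R x1)) $ k $ l) t0"
  proof (cases "k \<in> I \<and> l \<in> I")
    case True
    then show ?thesis
      unfolding gram_matrix_def herm_inner_def
      by (simp, intro extends_holomorphically_at_sum extends_holomorphically_at_mult
          extends_holomorphically_at_const real_analytic_at_restrict_to_line assms)
        (use True in simp)
  next
    case False
    then have "(\<lambda>t. gram_matrix I W (\<lambda>l. U l (t *\<^sub>R x1)) $ k $ l) = (\<lambda>_. if k = l then 1 else 0)"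
      by (auto simp: gram_matrix_def)
    then show ?thesis by (simp add: extends_holomorphically_at_const)
  qed
qed

lemma obtain_gram_lower_bound_on_line:
  fixes v :: "'a \<Rightarrow> real^'m::finite \<Rightarrow> complex^'k::finite"
  assumes "open D" "0 \<in> D" "\<forall>\<alpha>\<in>A. real_analytic_on (v \<alpha>) D" "dim_nonconstant_near_0 v A D"
  obtains x1 I al W c d where "card I = Suc (span_dim v A 0)" "al ` I \<subseteq> A" "c > 0"
    "\<forall>\<^sub>F t in at_right 0. c * t ^ d \<le> cmod (det (gram_matrix I W (\<lambda>l. v (al l) (t *\<^sub>R x1))))"
proof -
  obtain \<rho> where \<rho>: "\<rho> > 0" "ball 0 \<rho> \<subseteq> D" using assms(1,2) open_contains_ball by blast
  have analytic: "real_analytic_at (v \<alpha>) x" if "\<alpha> \<in> A" "x \<in> D" for \<alpha> x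
    using assms(3) that unfolding real_analytic_on_def by blast
  have cont: "isCont (v \<alpha>) 0" if "\<alpha> \<in> A" for \<alpha>
    using analytic[OF that assms(2)] by (rule real_analytic_at_imp_isCont)
  obtain x1 where x1: "x1 \<in> ball 0 \<rho>" "span_dim v A 0 < span_dim v A x1"
    using obtain_higher_span_dim_near_0[OF cont assms(4) open_ball _ \<rho>(2)] \<rho>(1) by auto
  obtain I :: "'k set" and al where I: "card I = Suc (span_dim v A 0)" "al ` I \<subseteq> A"
    and det1: "det (gram_matrix I (\<lambda>l. v (al l) x1) (\<lambda>l. v (al l) x1)) \<noteq> 0"
    using obtain_gram_nonzero_family[of "Suc (span_dim v A 0)" v A x1] x1(2) by auto
  define W where "W = (\<lambda>l. v (al l) x1)"
  define g where "g t = det (gram_matrix I W (\<lambda>l. v (al l) (t *\<^sub>R x1)))" for t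
  have "extends_holomorphically_at g t" if "t \<in> {0..1}" for t
  proof -
    have "norm (t *\<^sub>R x1) \<le> norm x1" using that by (simp add: mult_left_le_one_le)
    then have "t *\<^sub>R x1 \<in> D" using x1(1) \<rho>(2) by auto
    then show ?thesis
      unfolding g_def using I(2) analytic by (intro extends_holomorphically_det_gram_on_line) auto
  qed
  moreover have "g 1 \<noteq> 0" using det1 by (simp add: g_def W_def)
  ultimately obtain c d where "c > 0" "\<forall>\<^sub>F t in at_right 0. c * t ^ d \<le> cmod (g t)"
    by (rule extends_holomorphically_polynomial_lower_bound)
  with I show ?thesis by (intro that[of I al c d W x1]) (simp_all add: g_def)
qed

section \<open>Perturbations of higher order\<close>

definition agree_up_to_order :: "nat \<Rightarrow> ('a::real_normed_vector \<Rightarrow> 'b::real_normed_vector) \<Rightarrow> ('a \<Rightarrow> 'b) \<Rightarrow> bool"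
  where "agree_up_to_order e f g \<longleftrightarrow>
    (\<exists>C S. open S \<and> 0 \<in> S \<and> (\<forall>x\<in>S. norm (f x - g x) \<le> C * norm x ^ e))"

lemma agree_up_to_orderI:
  assumes "open S" "0 \<in> S" "r > 0" "\<forall>x\<in>ball 0 r \<inter> S. norm (f x - g x) \<le> C * norm x ^ e"
  shows "agree_up_to_order e f g"
  unfolding agree_up_to_order_def using assms by (intro exI[of _ C] exI[of _ "ball 0 r \<inter> S"]) auto

lemma agree_up_to_order_at_0:
  assumes "agree_up_to_order e f g" "0 < e"
  shows "f 0 = g 0"
proof -
  obtain C S where "0 \<in> S" "\<forall>x\<in>S. norm (f x - g x) \<le> C * norm x ^ e"
    using assms(1) unfolding agree_up_to_order_def by blast
  then have "norm (f 0 - g 0) \<le> C * norm (0::'a) ^ e" by blast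
  with assms(2) show ?thesis by (simp add: zero_power)
qed

lemma agree_up_to_order_on_line:
  assumes "agree_up_to_order e f g"
  shows "\<exists>C. \<forall>\<^sub>F t in at_right 0. norm (f (t *\<^sub>R y) - g (t *\<^sub>R y)) \<le> C * t ^ e"
proof -
  obtain C S where S: "open S" "0 \<in> S" and C: "\<forall>x\<in>S. norm (f x - g x) \<le> C * norm x ^ e"
    using assms unfolding agree_up_to_order_def by blast
  have "\<forall>\<^sub>F t in at_right 0. norm (f (t *\<^sub>R y) - g (t *\<^sub>R y)) \<le> (C * norm y ^ e) * t ^ e"
    using eventually_scaleR_in_open[OF S, where x = y] eventually_at_right_less[of 0]
  proof eventually_elim
    case (elim t)
    have "norm (f (t *\<^sub>R y) - g (t *\<^sub>R y)) \<le> C * norm (t *\<^sub>R y) ^ e"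
      by (rule C[rule_format, OF elim(1)])
    also have "\<dots> = (C * norm y ^ e) * t ^ e"
      using elim by (simp add: power_mult_distrib)
    finally show ?case .
  qed
  then show ?thesis by blast
qed

lemma eventually_norm_bounded_finite_family:
  fixes X :: "'i \<Rightarrow> 'a \<Rightarrow> 'b::real_normed_vector"
  assumes "finite I" "\<And>l. l \<in> I \<Longrightarrow> (X l \<longlongrightarrow> L l) F"
  obtains B where "\<forall>\<^sub>F t in F. \<forall>l\<in>I. norm (X l t) \<le> B"
proof -
  have "\<forall>\<^sub>F t in F. \<forall>l\<in>I. norm (X l t) \<le> (\<Sum>l\<in>I. norm (L l)) + 1"
  proof (rule eventually_ball_finite[OF assms(1)], intro ballI)
    fix l assume l: "l \<in> I"
    have "norm (L l) \<le> (\<Sum>l\<in>I. norm (L l))"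
      using member_le_sum[of l I "\<lambda>l. norm (L l)"] assms(1) l by simp
    with order_tendstoD(2)[OF tendsto_norm[OF assms(2)[OF l]], of "norm (L l) + 1"]
    show "\<forall>\<^sub>F t in F. norm (X l t) \<le> (\<Sum>l\<in>I. norm (L l)) + 1"
      by (auto elim: eventually_mono)
  qed
  then show ?thesis by (rule that)
qed

lemma eventually_norm_le_mult_finite_family:
  fixes X :: "'i \<Rightarrow> 'a \<Rightarrow> 'b::real_normed_vector"
  assumes "finite I" "\<And>l. l \<in> I \<Longrightarrow> \<exists>C. \<forall>\<^sub>F t in F. norm (X l t) \<le> C * g t"
    and "\<forall>\<^sub>F t in F. 0 \<le> g t"
  obtains C where "\<forall>\<^sub>F t in F. \<forall>l\<in>I. norm (X l t) \<le> C * g t"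
proof -
  obtain C where C: "\<And>l. l \<in> I \<Longrightarrow> \<forall>\<^sub>F t in F. norm (X l t) \<le> C l * g t"
    using assms(2) by metis
  have "\<forall>\<^sub>F t in F. \<forall>l\<in>I. norm (X l t) \<le> (\<Sum>l\<in>I. \<bar>C l\<bar>) * g t"
  proof (rule eventually_ball_finite[OF assms(1)], intro ballI)
    fix l assume l: "l \<in> I"
    have le: "C l \<le> (\<Sum>l\<in>I. \<bar>C l\<bar>)"
      using member_le_sum[of l I "\<lambda>l. \<bar>C l\<bar>"] assms(1) l by simp
    from C[OF l] assms(3) show "\<forall>\<^sub>F t in F. norm (X l t) \<le> (\<Sum>l\<in>I. \<bar>C l\<bar>) * g t"
    proof eventually_elim
      case (elim t)
      then show ?case using le mult_right_mono[OF le elim(2)] by linarith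
    qed
  qed
  then show ?thesis by (rule that)
qed

lemma eventually_det_gram_perturbed_nonzero:
  fixes U U' :: "'k::finite \<Rightarrow> real \<Rightarrow> complex^'k" and c C B :: real
  assumes c: "c > 0" and lower: "\<forall>\<^sub>F t in at_right 0. c * t ^ d \<le> cmod (det (gram_matrix I W (\<lambda>l. U l t)))"
    and bounded: "\<forall>\<^sub>F t in at_right 0. \<forall>l\<in>I. norm (U l t) \<le> B"
    and close: "\<forall>\<^sub>F t in at_right 0. \<forall>l\<in>I. norm (U' l t - U l t) \<le> C * t ^ e"
    and "d < e"
  shows "\<forall>\<^sub>F t in at_right 0. det (gram_matrix I W (\<lambda>l. U' l t)) \<noteq> 0"
proof -
  obtain K where K: "\<And>U U' \<epsilon>. (\<And>l. l \<in> I \<Longrightarrow> norm (U l) \<le> B + 1) \<Longrightarrow> (\<And>l. l \<in> I \<Longrightarrow> norm (U' l) \<le> B + 1)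
      \<Longrightarrow> (\<And>l. l \<in> I \<Longrightarrow> norm (U l - U' l) \<le> \<epsilon>) \<Longrightarrow> 0 \<le> \<epsilon>
      \<Longrightarrow> cmod (det (gram_matrix I W U) - det (gram_matrix I W U')) \<le> K * \<epsilon>"
    using det_gram_matrix_lipschitz[where I = I and W = W and B = "B + 1"] by blast
  have "((\<lambda>t. \<bar>C\<bar> * t ^ e) \<longlongrightarrow> \<bar>C\<bar> * 0 ^ e) (at_right 0)" by (intro tendsto_intros)
  moreover have "((\<lambda>t. K * \<bar>C\<bar> * t ^ (e - d)) \<longlongrightarrow> K * \<bar>C\<bar> * 0 ^ (e - d)) (at_right 0)"
    by (intro tendsto_intros)
  ultimately have "((\<lambda>t. \<bar>C\<bar> * t ^ e) \<longlongrightarrow> 0) (at_right 0)"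
    "((\<lambda>t. K * \<bar>C\<bar> * t ^ (e - d)) \<longlongrightarrow> 0) (at_right 0)"
    using \<open>d < e\<close> by (simp_all add: zero_power)
  then have small: "\<forall>\<^sub>F t in at_right 0. \<bar>C\<bar> * t ^ e < 1 \<and> K * \<bar>C\<bar> * t ^ (e - d) < c"
    using c by (intro eventually_conj order_tendstoD(2)) auto
  show ?thesis
    using lower small bounded close eventually_at_right_less[of 0]
  proof eventually_elim
    case (elim t)
    let ?\<epsilon> = "\<bar>C\<bar> * t ^ e"
    have "C * t ^ e \<le> ?\<epsilon>" using elim(5) by (intro mult_right_mono) auto
    then have diff: "norm (U l t - U' l t) \<le> ?\<epsilon>" if "l \<in> I" for l
      using elim(4) that by (force simp: norm_minus_commute)
    moreover have "norm (U l t) \<le> B + 1" "norm (U' l t) \<le> B + 1" if "l \<in> I" for l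
      using elim(2,3) that norm_triangle_sub[of "U' l t" "U l t"] diff[OF that]
      by (auto simp: norm_minus_commute)
    ultimately have "cmod (det (gram_matrix I W (\<lambda>l. U l t)) - det (gram_matrix I W (\<lambda>l. U' l t)))
        \<le> K * ?\<epsilon>"
      using elim(5) by (intro K) auto
    also have "K * ?\<epsilon> = t ^ d * (K * \<bar>C\<bar> * t ^ (e - d))"
      using \<open>d < e\<close> by (simp add: power_add[symmetric])
    also have "\<dots> < t ^ d * c"
      using elim(2,5) by (intro mult_strict_left_mono) auto
    finally have "cmod (det (gram_matrix I W (\<lambda>l. U l t)) - det (gram_matrix I W (\<lambda>l. U' l t)))
        < c * t ^ d" by (simp only: mult.commute)
    with elim(1) show ?case by auto
  qed
qed

lemma eventually_card_le_span_dim_perturbed: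
  fixes v v' :: "'a \<Rightarrow> real^'m::finite \<Rightarrow> complex^'k::finite"
  assumes cont: "\<And>\<alpha>. \<alpha> \<in> A \<Longrightarrow> isCont (v \<alpha>) 0" and I: "al ` I \<subseteq> A"
    and c: "c > 0"
    and lower: "\<forall>\<^sub>F t in at_right 0. c * t ^ d \<le> cmod (det (gram_matrix I W (\<lambda>l. v (al l) (t *\<^sub>R x1))))"
    and near: "\<And>\<alpha>. \<alpha> \<in> A \<Longrightarrow> agree_up_to_order e (v' \<alpha>) (v \<alpha>)"
    and "d < e"
  shows "\<forall>\<^sub>F t in at_right 0. card I \<le> span_dim v' A (t *\<^sub>R x1)"
proof -
  obtain B where B: "\<forall>\<^sub>F t in at_right 0. \<forall>l\<in>I. norm (v (al l) (t *\<^sub>R x1)) \<le> B"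
  proof (rule eventually_norm_bounded_finite_family[OF finite])
    fix l assume "l \<in> I"
    with I cont have "isCont (v (al l)) 0" by blast
    then show "((\<lambda>t. v (al l) (t *\<^sub>R x1)) \<longlongrightarrow> v (al l) (0 *\<^sub>R x1)) (at_right 0)"
      by (intro isCont_tendsto_compose[where g = "v (al l)"] tendsto_intros) simp
  qed
  obtain C where C: "\<forall>\<^sub>F t in at_right 0. \<forall>l\<in>I.
      norm (v' (al l) (t *\<^sub>R x1) - v (al l) (t *\<^sub>R x1)) \<le> C * t ^ e"
  proof (rule eventually_norm_le_mult_finite_family[OF finite])
    fix l assume "l \<in> I"
    with I near show "\<exists>C. \<forall>\<^sub>F t in at_right 0.
        norm (v' (al l) (t *\<^sub>R x1) - v (al l) (t *\<^sub>R x1)) \<le> C * t ^ e"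
      by (blast intro: agree_up_to_order_on_line)
  qed (auto intro: eventually_mono[OF eventually_at_right_less])
  have "\<forall>\<^sub>F t in at_right 0. det (gram_matrix I W (\<lambda>l. v' (al l) (t *\<^sub>R x1))) \<noteq> 0"
    by (rule eventually_det_gram_perturbed_nonzero[OF c lower B C \<open>d < e\<close>])
  then show ?thesis
    by eventually_elim (rule card_le_span_dim_if_det_gram_nonzero[where v = v', OF _ I])
qed

theorem lemma4p3:
  fixes v :: "'a \<Rightarrow> real^'m \<Rightarrow> complex^'k" and A :: "'a set" and D :: "(real^'m) set"
  assumes "open D" and "0 \<in> D"
    and "\<forall>\<alpha>\<in>A. real_analytic_on (v \<alpha>) D"
    and "dim_nonconstant_near_0 v A D"
  shows "\<exists>\<kappa>::nat. \<kappa> > 1 \<and>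
    (\<forall>(v' :: 'a \<Rightarrow> real^'m \<Rightarrow> complex^'k) D'.
       open D' \<longrightarrow> 0 \<in> D' \<longrightarrow> (\<forall>\<alpha>\<in>A. real_analytic_on (v' \<alpha>) D') \<longrightarrow>
       (\<forall>\<alpha>\<in>A. \<exists>C r. r > 0 \<and>
          (\<forall>x\<in>ball 0 r \<inter> D \<inter> D'. norm (v' \<alpha> x - v \<alpha> x) \<le> C * norm x ^ \<kappa>)) \<longrightarrow>
       dim_nonconstant_near_0 v' A D')"
proof -
  have cont: "isCont (v \<alpha>) 0" if "\<alpha> \<in> A" for \<alpha>
    using assms(2,3) that unfolding real_analytic_on_def by (blast intro: real_analytic_at_imp_isCont)
  obtain x1 I al W c d where I: "card I = Suc (span_dim v A 0)" "al ` I \<subseteq> A" and c: "c > 0"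
    and lower: "\<forall>\<^sub>F t in at_right 0. c * t ^ d \<le> cmod (det (gram_matrix I W (\<lambda>l. v (al l) (t *\<^sub>R x1))))"
    by (rule obtain_gram_lower_bound_on_line[OF assms])
  show ?thesis
  proof (intro exI[of _ "d + 2"] conjI allI impI)
    fix v' :: "'a \<Rightarrow> real^'m \<Rightarrow> complex^'k" and D'
    assume D': "open D'" "0 \<in> D'"
      and close: "\<forall>\<alpha>\<in>A. \<exists>C r. r > 0 \<and>
        (\<forall>x\<in>ball 0 r \<inter> D \<inter> D'. norm (v' \<alpha> x - v \<alpha> x) \<le> C * norm x ^ (d + 2))"
    have near: "agree_up_to_order (d + 2) (v' \<alpha>) (v \<alpha>)" if "\<alpha> \<in> A" for \<alpha>
      using close that assms(1,2) D' by (blast intro: agree_up_to_orderI[where S = "D \<inter> D'"])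
    have "v' \<alpha> 0 = v \<alpha> 0" if "\<alpha> \<in> A" for \<alpha>
      using near[OF that] by (rule agree_up_to_order_at_0) simp
    then have "span_dim v' A 0 = span_dim v A 0"
      by (simp add: span_dim_def cong: image_cong)
    with I(1) have "\<forall>\<^sub>F t in at_right 0. span_dim v' A 0 < span_dim v' A (t *\<^sub>R x1)"
      using eventually_card_le_span_dim_perturbed[OF cont I(2) c lower near] by (auto elim: eventually_mono)
    then show "dim_nonconstant_near_0 v' A D'" by (rule dim_nonconstant_near_0I)
  qed simp
qed

end
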